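(* Consider the covariate-adaptive randomization design described in the context with $I=2$ covariates, each having 2 levels, and nonnegative weights $w_{o}, w_{m,1}, w_{m,2}, w_{s}$ summing to 1. Assume further that $w_{m,1}=w_{m,2}=:w_{m}$. Then the condition "with $u_{1}=1$, $u_{2}=w_{o}+w_{m,1}$, $u_{3}=w_{o}+w_{m,2}$, $u_{4}=w_{o}$, the solution $\mathbf{x}=(x_1,x_2,x_3)$ of \[ \begin{pmatrix} u_{1} & u_{2} & u_{3}\\ u_{2} & u_{1} & u_{4}\\ u_{3} & u_{4} & u_{1}\end{pmatrix} \begin{pmatrix} x_{1}\\ x_{2}\\ x_{3}\end{pmatrix} =\begin{pmatrix} u_{4}\\ u_{3}\\ u_{2}\end{pmatrix} \] satisfies $|x_{1}|+|x_{2}|+|x_{3}|<1$" is equivalent to \[ w_{m}<C(w_{o}):=\frac{\sqrt{(1-w_{o})^{2}+4(1+w_{o})^{2}}-1-3w_{o}}{4}. \] Hence, if in addition $w_s>0$, the chain $(\mathbf{D}_n)_{n\ge1}$ of within-stratum imbalances is a positive recurrent Markov chain with period 2 on $\mathbb{Z}^4$ whenever $w_m<C(w_o)$.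
   Context: Two treatments (1 and 2) are compared; patients arrive sequentially. There are $I$ covariates, covariate $i$ having $m_i$ levels; a stratum is a covariate profile $(k_1,\ldots,k_I)$ and a margin $(i;k_i)$ is the set of patients whose $i$th covariate is at level $k_i$. Covariate profiles are i.i.d. multinomial over strata. After $n-1$ patients, $D_{n-1}$, $D_{n-1}(i;k_i)$, $D_{n-1}(k_1,\ldots,k_I)$ are the differences (treatment 1 count minus treatment 2 count) overall, on margin $(i;k_i)$, and within stratum. For a new patient in stratum $(k_1^*,\ldots,k_I^* )$, $\mathit{Imb}_n^{(1)}=w_o[D_{n-1}+1]^2+\sum_i w_{m,i}[D_{n-1}(i;k_i^* )+1]^2+w_s[D_{n-1}(k_1^*,\ldots,k_I^* )+1]^2$ and $\mathit{Imb}_n^{(2)}$ is the same with $-1$ replacing $+1$; the patient is assigned to treatment 1 with probability $q$, $p$, or $1/2$ according as $\mathit{Imb}_n^{(1)}>$, $<$, or $=$ $\mathit{Imb}_n^{(2)}$, where $0<q<p<1$, $p+q=1$ (first patient: probability $1/2$). $\mathbf{D}_n$ is the array of within-stratum differences after $n$ patients. *)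

theory Defs
  imports Complex_Main
begin

text \<open>Two binary covariates: a stratum is a pair of levels (k1,k2).
  A state is the array D of within-stratum differences (an element of Z^4).\<close>
type_synonym stratum = "bool \<times> bool"
type_synonym state = "stratum \<Rightarrow> int"

text \<open>Weighted imbalance if the new patient in stratum s is assigned with
  delta = +1 (treatment 1) or delta = -1 (treatment 2).\<close>
definition imb :: "real \<Rightarrow> real \<Rightarrow> real \<Rightarrow> real \<Rightarrow> state \<Rightarrow> stratum \<Rightarrow> int \<Rightarrow> real" where
  "imb wo wm1 wm2 ws D s d =
     wo * (of_int (sum D UNIV + d))^2
   + wm1 * (of_int (D (fst s, False) + D (fst s, True) + d))^2
   + wm2 * (of_int (D (False, snd s) + D (True, snd s) + d))^2
   + ws * (of_int (D s + d))^2"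

definition prob1 :: "real \<Rightarrow> real \<Rightarrow> real \<Rightarrow> real \<Rightarrow> real \<Rightarrow> real \<Rightarrow> state \<Rightarrow> stratum \<Rightarrow> real" where
  "prob1 p q wo wm1 wm2 ws D s =
     (if imb wo wm1 wm2 ws D s 1 > imb wo wm1 wm2 ws D s (-1) then q
      else if imb wo wm1 wm2 ws D s 1 < imb wo wm1 wm2 ws D s (-1) then p
      else 1/2)"

text \<open>One-step expectation operator of the chain: stratum s occurs with probability pr s,
  then D s increases by 1 with probability phi D s, decreases by 1 otherwise.\<close>
definition step :: "(stratum \<Rightarrow> real) \<Rightarrow> (state \<Rightarrow> stratum \<Rightarrow> real) \<Rightarrow> (state \<Rightarrow> real) \<Rightarrow> state \<Rightarrow> real" where
  "step pr phi f x = (\<Sum>s\<in>UNIV. pr s * (phi x s * f (x(s := x s + 1))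
                                       + (1 - phi x s) * f (x(s := x s - 1))))"

primrec Pn :: "(stratum \<Rightarrow> real) \<Rightarrow> (state \<Rightarrow> stratum \<Rightarrow> real) \<Rightarrow> nat \<Rightarrow> state \<Rightarrow> state \<Rightarrow> real" where
  "Pn pr phi 0 x y = (if x = y then 1 else 0)"
| "Pn pr phi (Suc n) x y = step pr phi (\<lambda>z. Pn pr phi n z y) x"

text \<open>First-passage probabilities: probability, starting at x, that the first visit to y
  at a time \<ge> 1 happens at time n.\<close>
primrec fp :: "(stratum \<Rightarrow> real) \<Rightarrow> (state \<Rightarrow> stratum \<Rightarrow> real) \<Rightarrow> nat \<Rightarrow> state \<Rightarrow> state \<Rightarrow> real" where
  "fp pr phi 0 x y = 0"
| "fp pr phi (Suc n) x y =
     step pr phi (\<lambda>z. if z = y then (if n = 0 then 1 else 0) else fp pr phi n z y) x"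

definition pos_recurrent :: "(stratum \<Rightarrow> real) \<Rightarrow> (state \<Rightarrow> stratum \<Rightarrow> real) \<Rightarrow> state \<Rightarrow> bool" where
  "pos_recurrent pr phi x \<longleftrightarrow>
     (\<Sum>n. fp pr phi n x x) = 1 \<and> summable (\<lambda>n. real n * fp pr phi n x x)"

definition period :: "(stratum \<Rightarrow> real) \<Rightarrow> (state \<Rightarrow> stratum \<Rightarrow> real) \<Rightarrow> state \<Rightarrow> nat" where
  "period pr phi x = Gcd {n. 0 < n \<and> 0 < Pn pr phi n x x}"

definition reachable :: "(stratum \<Rightarrow> real) \<Rightarrow> (state \<Rightarrow> stratum \<Rightarrow> real) \<Rightarrow> state \<Rightarrow> state \<Rightarrow> bool" where
  "reachable pr phi x y \<longleftrightarrow> (\<exists>n. 0 < Pn pr phi n x y)"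

definition lin_cond :: "real \<Rightarrow> real \<Rightarrow> real \<Rightarrow> bool" where
  "lin_cond wo wm1 wm2 \<longleftrightarrow>
     (let u1 = 1; u2 = wo + wm1; u3 = wo + wm2; u4 = wo in
      \<exists>x1 x2 x3 :: real.
        u1 * x1 + u2 * x2 + u3 * x3 = u4 \<and>
        u2 * x1 + u1 * x2 + u4 * x3 = u3 \<and>
        u3 * x1 + u4 * x2 + u1 * x3 = u2 \<and>
        \<bar>x1\<bar> + \<bar>x2\<bar> + \<bar>x3\<bar> < 1)"

definition Cfun :: "real \<Rightarrow> real" where
  "Cfun wo = (sqrt ((1 - wo)^2 + 4 * (1 + wo)^2) - 1 - 3 * wo) / 4"

end

theory Submission
  imports Defs
begin

text \<open>For w_m1 = w_m2 the linear system forces x2 = x3, and the condition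
  |x1| + 2|x2| < 1 becomes a quadratic inequality in w_o + w_m whose positive root is C(w_o).

  The chain is analysed with the total weighted squared imbalance V(D). Moving D(s) by +-1
  changes V by 1 +- 2 L(D,s), where 4 L(D,s) is exactly the imbalance difference that decides
  the biased coin, so the drift of V is 1 - 2(p-q) E|L(D,s)|. For w_s > 0 this expectation
  grows linearly in |D|, hence V decreases outside a finite ball; inside it the chain reaches
  any fixed state in boundedly many steps with probability bounded below, and Foster's
  criterion gives positive recurrence of every state.
  Every step changes the total sum of D by +-1 and a step up followed by a step down returns,
  so the period is 2.\<close>

section \<open>Geometry of the state space\<close>

lemma sum_strata:
  "(\<Sum>s\<in>UNIV. f s) = f (False,False) + f (False,True) + f (True,False) + f (True,True)"
proof -
  have strata: "(UNIV :: stratum set) = {(False,False), (False,True), (True,False), (True,True)}"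
    by auto
  show ?thesis by (subst strata) (simp add: add.assoc)
qed

lemma sum_state_upd: "sum ((x::state)(s := v)) UNIV = sum x UNIV - x s + v"
  by (cases s) (auto simp: sum_strata)

definition norm1 :: "state \<Rightarrow> real" where
  "norm1 x = (\<Sum>s\<in>UNIV. \<bar>of_int (x s)\<bar>)"

lemma norm1_nonneg: "0 \<le> norm1 x"
  unfolding norm1_def by (rule sum_nonneg) simp

lemma norm1_upd_le: "\<bar>v - x s\<bar> \<le> 1 \<Longrightarrow> norm1 (x(s := v)) \<le> norm1 x + 1"
  by (cases s) (auto simp: norm1_def sum_strata)

definition dist1 :: "state \<Rightarrow> state \<Rightarrow> int" where
  "dist1 z y = (\<Sum>s\<in>UNIV. \<bar>z s - y s\<bar>)"

lemma dist1_upd: "dist1 (z(s := v)) y = dist1 z y - \<bar>z s - y s\<bar> + \<bar>v - y s\<bar>"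
  by (cases s) (auto simp: dist1_def sum_strata)

lemma dist1_nonneg: "0 \<le> dist1 z y"
  unfolding dist1_def by (rule sum_nonneg) simp

lemma dist1_eq_0_iff: "dist1 z y = 0 \<longleftrightarrow> z = y"
proof
  assume "dist1 z y = 0"
  then have "\<forall>s\<in>UNIV. \<bar>z s - y s\<bar> = 0"
    unfolding dist1_def by (subst sum_nonneg_eq_0_iff[symmetric]) auto
  then show "z = y" by auto
qed (simp add: dist1_def)

lemma dist1_le_norm1: "of_int (dist1 z y) \<le> norm1 z + norm1 y"
proof -
  have "of_int (dist1 z y) = (\<Sum>s\<in>UNIV. \<bar>real_of_int (z s) - of_int (y s)\<bar>)"
    unfolding dist1_def by simp
  also have "\<dots> \<le> (\<Sum>s\<in>UNIV. \<bar>real_of_int (z s)\<bar> + \<bar>of_int (y s)\<bar>)"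
    by (rule sum_mono) (rule abs_triangle_ineq4)
  finally show ?thesis unfolding norm1_def by (simp add: sum.distrib)
qed

lemma dist1_decreasing_neighbour:
  assumes "z \<noteq> y"
  obtains s w where "w = z(s := z s + 1) \<or> w = z(s := z s - 1)" "dist1 w y = dist1 z y - 1"
proof -
  obtain s where s: "z s \<noteq> y s" using assms by (meson ext)
  show thesis
  proof (cases "z s > y s")
    case True
    then show thesis by (intro that[of "z(s := z s - 1)" s]) (simp_all add: dist1_upd)
  next
    case False
    with s show thesis by (intro that[of "z(s := z s + 1)" s]) (simp_all add: dist1_upd)
  qed
qed

section \<open>Walks that move one stratum by one unit per step\<close>

locale walk =
  fixes pr :: "stratum \<Rightarrow> real" and phi :: "state \<Rightarrow> stratum \<Rightarrow> real"
  assumes pr_pos: "\<And>s. 0 < pr s" and pr_sum: "(\<Sum>s\<in>UNIV. pr s) = 1"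
    and phi_nonneg: "\<And>x s. 0 \<le> phi x s" and phi_le_1: "\<And>x s. phi x s \<le> 1"
begin

lemma pr_le_1: "pr s \<le> 1"
proof -
  have "pr s \<le> (\<Sum>t\<in>UNIV. pr t)"
    by (rule member_le_sum) (use pr_pos in \<open>auto simp: less_imp_le\<close>)
  then show ?thesis using pr_sum by simp
qed

lemma step_add_scaled: "step pr phi (\<lambda>w. f w + b * g w) x = step pr phi f x + b * step pr phi g x"
proof -
  have "step pr phi (\<lambda>w. f w + b * g w) x =
      (\<Sum>s\<in>UNIV. pr s * (phi x s * f (x(s := x s + 1)) + (1 - phi x s) * f (x(s := x s - 1)))
        + b * (pr s * (phi x s * g (x(s := x s + 1)) + (1 - phi x s) * g (x(s := x s - 1)))))"
    unfolding step_def by (rule sum.cong) (auto simp: algebra_simps)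
  then show ?thesis unfolding step_def by (simp add: sum.distrib sum_distrib_left)
qed

lemma step_const: "step pr phi (\<lambda>_. c) x = c"
proof -
  have "step pr phi (\<lambda>_. c) x = (\<Sum>s\<in>UNIV. pr s * c)"
    unfolding step_def by (simp add: algebra_simps)
  also have "\<dots> = c" using pr_sum by (simp flip: sum_distrib_right)
  finally show ?thesis .
qed

lemma step_mono:
  assumes "\<And>s. f (x(s := x s + 1)) \<le> g (x(s := x s + 1))"
    and "\<And>s. f (x(s := x s - 1)) \<le> g (x(s := x s - 1))"
  shows "step pr phi f x \<le> step pr phi g x"
  unfolding step_def
proof (rule sum_mono)
  fix s
  have "phi x s * f (x(s := x s + 1)) \<le> phi x s * g (x(s := x s + 1))"
    "(1 - phi x s) * f (x(s := x s - 1)) \<le> (1 - phi x s) * g (x(s := x s - 1))"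
    using assms phi_nonneg phi_le_1 by (simp_all add: mult_left_mono)
  then show "pr s * (phi x s * f (x(s := x s + 1)) + (1 - phi x s) * f (x(s := x s - 1)))
      \<le> pr s * (phi x s * g (x(s := x s + 1)) + (1 - phi x s) * g (x(s := x s - 1)))"
    using pr_pos[of s] by (intro mult_left_mono) auto
qed

lemma step_ge_moves:
  assumes f_nonneg: "\<And>w. 0 \<le> f w"
  shows "pr s * phi x s * f (x(s := x s + 1)) \<le> step pr phi f x"
    and "pr s * (1 - phi x s) * f (x(s := x s - 1)) \<le> step pr phi f x"
proof -
  have up: "0 \<le> pr s * (phi x s * f (x(s := x s + 1)))"
    and down: "0 \<le> pr s * ((1 - phi x s) * f (x(s := x s - 1)))" for s
    using pr_pos[of s] f_nonneg phi_nonneg phi_le_1 by simp_all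
  have "pr s * (phi x s * f (x(s := x s + 1))) + pr s * ((1 - phi x s) * f (x(s := x s - 1)))
      \<le> step pr phi f x"
    unfolding step_def distrib_left by (intro member_le_sum) (simp_all add: up down)
  then show "pr s * phi x s * f (x(s := x s + 1)) \<le> step pr phi f x"
    and "pr s * (1 - phi x s) * f (x(s := x s - 1)) \<le> step pr phi f x"
    unfolding mult.assoc using up[of s] down[of s] by linarith+
qed

text \<open>The one-step operator of the chain killed on entering y.\<close>

definition taboo :: "state \<Rightarrow> (state \<Rightarrow> real) \<Rightarrow> state \<Rightarrow> real" where
  "taboo y f z = step pr phi (\<lambda>w. if w = y then 0 else f w) z"

lemma taboo_add_scaled: "taboo y (\<lambda>w. f w + b * g w) z = taboo y f z + b * taboo y g z"
proof -
  have "(\<lambda>w. if w = y then 0 else f w + b * g w)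
      = (\<lambda>w. (if w = y then 0 else f w) + b * (if w = y then 0 else g w))"
    by auto
  then show ?thesis unfolding taboo_def by (simp add: step_add_scaled)
qed

lemma taboo_mono: "(\<And>w. f w \<le> g w) \<Longrightarrow> taboo y f z \<le> taboo y g z"
  unfolding taboo_def by (rule step_mono) auto

lemma taboo_le_neighbours:
  assumes "\<And>s. (if z(s := z s + 1) = y then 0 else f (z(s := z s + 1))) \<le> K"
    and "\<And>s. (if z(s := z s - 1) = y then 0 else f (z(s := z s - 1))) \<le> K"
  shows "taboo y f z \<le> K"
proof -
  have "taboo y f z \<le> step pr phi (\<lambda>_. K) z"
    unfolding taboo_def by (rule step_mono) (use assms in auto)
  then show ?thesis by (simp add: step_const)
qed

lemma taboo_le_const: "(\<And>w. f w \<le> c) \<Longrightarrow> 0 \<le> c \<Longrightarrow> taboo y f z \<le> c"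
  by (rule taboo_le_neighbours) auto

lemma taboo_nonneg: "(\<And>w. 0 \<le> f w) \<Longrightarrow> 0 \<le> taboo y f z"
proof -
  assume "\<And>w. 0 \<le> f w"
  then have "step pr phi (\<lambda>_. 0) z \<le> taboo y f z"
    unfolding taboo_def by (intro step_mono) auto
  then show ?thesis by (simp add: step_const)
qed

lemma taboo_sum: "taboo y (\<lambda>w. \<Sum>n<(N::nat). F n w) z = (\<Sum>n<N. taboo y (F n) z)"
proof (induction N arbitrary: z)
  case 0
  show ?case by (simp add: taboo_def step_const)
next
  case (Suc N)
  have "taboo y (\<lambda>w. \<Sum>n<Suc N. F n w) z = taboo y (\<lambda>w. (\<Sum>n<N. F n w) + 1 * F N w) z"
    by simp
  also have "\<dots> = taboo y (\<lambda>w. \<Sum>n<N. F n w) z + 1 * taboo y (F N) z"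
    by (rule taboo_add_scaled)
  finally show ?case using Suc by simp
qed

lemma taboo_pow_add_scaled:
  "(taboo y ^^ m) (\<lambda>w. f w + b * g w) z = (taboo y ^^ m) f z + b * (taboo y ^^ m) g z"
proof (induction m arbitrary: z)
  case (Suc m)
  then have "(taboo y ^^ m) (\<lambda>w. f w + b * g w) = (\<lambda>z. (taboo y ^^ m) f z + b * (taboo y ^^ m) g z)"
    by auto
  then show ?case by (simp add: taboo_add_scaled)
qed simp

lemma taboo_pow_mono: "(\<And>w. f w \<le> g w) \<Longrightarrow> (taboo y ^^ m) f z \<le> (taboo y ^^ m) g z"
  by (induction m arbitrary: z) (simp_all add: taboo_mono)

lemma taboo_pow_nonneg: "(\<And>w. 0 \<le> f w) \<Longrightarrow> 0 \<le> (taboo y ^^ m) f z"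
  by (induction m arbitrary: z) (simp_all add: taboo_nonneg)

lemma taboo_pow_le_const: "(\<And>w. f w \<le> c) \<Longrightarrow> 0 \<le> c \<Longrightarrow> (taboo y ^^ m) f z \<le> c"
  by (induction m arbitrary: z) (simp_all add: taboo_le_const)

text \<open>Probability, starting at z, of not having visited y at any time 1, ..., n.\<close>

definition survival :: "state \<Rightarrow> nat \<Rightarrow> state \<Rightarrow> real" where
  "survival y n = (taboo y ^^ n) (\<lambda>_. 1)"

lemma survival_0 [simp]: "survival y 0 z = 1"
  by (simp add: survival_def)

lemma survival_Suc: "survival y (Suc n) = taboo y (survival y n)"
  by (simp add: survival_def)

lemma survival_nonneg: "0 \<le> survival y n z"
  unfolding survival_def by (rule taboo_pow_nonneg) simp

lemma survival_le_1: "survival y n z \<le> 1"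
  unfolding survival_def by (rule taboo_pow_le_const) auto

lemma survival_Suc_le: "survival y (Suc n) z \<le> survival y n z"
proof (induction n arbitrary: z)
  case 0
  then show ?case by (simp add: survival_le_1)
next
  case (Suc n)
  then show ?case
    unfolding survival_Suc[of y "Suc n"] survival_Suc[of y n] by (intro taboo_mono) (simp add: survival_Suc)
qed

lemma fp_Suc_eq_survival_diff: "fp pr phi (Suc n) z y = survival y n z - survival y (Suc n) z"
proof (induction n arbitrary: z)
  case 0
  have "step pr phi (\<lambda>w. if w = y then 1 else 0) z + 1 * taboo y (\<lambda>_. 1) z = 1"
    unfolding taboo_def
    by (subst step_add_scaled[symmetric]) (simp add: step_const[of 1, simplified] if_distrib cong: if_cong)
  then show ?case by (simp add: survival_def cong: if_cong)
next
  case (Suc n)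
  have "(\<lambda>w. if w = y then 0 else fp pr phi (Suc n) w y)
      = (\<lambda>w. if w = y then 0 else survival y n w + (-1) * survival y (Suc n) w)"
    using Suc.IH by auto
  then have "fp pr phi (Suc (Suc n)) z y = taboo y (\<lambda>w. survival y n w + (-1) * survival y (Suc n) w) z"
    unfolding taboo_def fp.simps(2) by simp
  also have "\<dots> = survival y (Suc n) z - survival y (Suc (Suc n)) z"
    unfolding taboo_add_scaled survival_Suc[of y "Suc n"] survival_Suc[of y n] by simp
  finally show ?case .
qed

declare fp.simps(2) [simp del]

lemma fp_nonneg: "0 \<le> fp pr phi n z y"
  using fp_Suc_eq_survival_diff survival_Suc_le by (cases n) simp_all

lemma sum_fp_eq: "(\<Sum>k<Suc n. fp pr phi k z y) = 1 - survival y n z"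
  by (induction n) (simp_all add: fp_Suc_eq_survival_diff)

text \<open>The expectation of min(tau, N) for the first return time tau to y.\<close>

definition trunc_return_time :: "state \<Rightarrow> nat \<Rightarrow> state \<Rightarrow> real" where
  "trunc_return_time y N z = (\<Sum>n<N. survival y n z)"

lemma trunc_return_time_le: "trunc_return_time y N z \<le> real N"
proof -
  have "trunc_return_time y N z \<le> (\<Sum>n<N. 1)"
    unfolding trunc_return_time_def by (rule sum_mono) (rule survival_le_1)
  then show ?thesis by simp
qed

lemma trunc_return_time_Suc: "trunc_return_time y (Suc N) z = 1 + taboo y (trunc_return_time y N) z"
proof -
  have "trunc_return_time y (Suc N) z = survival y 0 z + (\<Sum>n<N. survival y (Suc n) z)"
    unfolding trunc_return_time_def by (rule sum.lessThan_Suc_shift)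
  also have "\<dots> = 1 + taboo y (\<lambda>w. \<Sum>n<N. survival y n w) z"
    by (simp add: survival_Suc taboo_sum)
  finally show ?thesis by (simp add: trunc_return_time_def[abs_def])
qed

lemma trunc_return_time_add:
  "trunc_return_time y (N + m) z \<le> real m + (taboo y ^^ m) (trunc_return_time y N) z"
proof (induction m arbitrary: z)
  case (Suc m)
  let ?R = "trunc_return_time y N"
  have "trunc_return_time y (N + Suc m) z = 1 + taboo y (trunc_return_time y (N + m)) z"
    by (simp add: trunc_return_time_Suc)
  also have "\<dots> \<le> 1 + taboo y (\<lambda>w. (taboo y ^^ m) ?R w + real m * 1) z"
    using Suc by (intro add_left_mono taboo_mono) (simp add: algebra_simps)
  also have "\<dots> = 1 + (taboo y ^^ Suc m) ?R z + real m * taboo y (\<lambda>_. 1) z"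
    using taboo_add_scaled[of y "(taboo y ^^ m) ?R" "real m" "\<lambda>_. 1" z] by simp
  also have "\<dots> \<le> 1 + (taboo y ^^ Suc m) ?R z + real m * 1"
    by (intro add_left_mono mult_left_mono taboo_le_const) auto
  finally show ?case by simp
qed simp

lemma fp_moment:
  "(\<Sum>k<Suc N. real k * fp pr phi k z y) + real N * survival y N z = trunc_return_time y N z"
proof (induction N)
  case (Suc N)
  have "trunc_return_time y (Suc N) z = trunc_return_time y N z + survival y N z"
    by (simp add: trunc_return_time_def)
  with Suc.IH show ?case
    by (simp add: fp_Suc_eq_survival_diff algebra_simps)
qed (simp add: trunc_return_time_def)

lemma pos_recurrent_if_trunc_return_time_bounded:
  assumes bounded: "\<And>N. trunc_return_time x N x \<le> B"
  shows "pos_recurrent pr phi x"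
proof -
  have survival_summable: "summable (\<lambda>n. survival x n x)"
  proof (rule bounded_imp_summable)
    show "(\<Sum>k\<le>n. survival x k x) \<le> B" for n
      using bounded[of "Suc n"] by (simp add: trunc_return_time_def lessThan_Suc_atMost)
  qed (rule survival_nonneg)
  have "(\<lambda>n. 1 - survival x n x) \<longlonglongrightarrow> 1 - 0"
    by (intro tendsto_diff tendsto_const summable_LIMSEQ_zero survival_summable)
  then have "(\<lambda>n. 1 - survival x n x) \<longlonglongrightarrow> 1"
    by simp
  then have "(\<lambda>n. \<Sum>k<Suc n. fp pr phi k x x) \<longlonglongrightarrow> 1"
    by (simp only: sum_fp_eq)
  then have "(\<lambda>n. fp pr phi n x x) sums 1"
    unfolding sums_def by (rule LIMSEQ_imp_Suc[where f = "\<lambda>n. \<Sum>k<n. fp pr phi k x x"])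
  moreover have "summable (\<lambda>n. real n * fp pr phi n x x)"
  proof (rule bounded_imp_summable)
    fix n
    have "(\<Sum>k\<le>n. real k * fp pr phi k x x) = (\<Sum>k<Suc n. real k * fp pr phi k x x)"
      by (simp only: lessThan_Suc_atMost)
    also have "\<dots> \<le> trunc_return_time x n x"
      using fp_moment[where N = n and z = x and y = x]
        mult_nonneg_nonneg[OF of_nat_0_le_iff survival_nonneg, of n x n x] by linarith
    finally show "(\<Sum>k\<le>n. real k * fp pr phi k x x) \<le> B"
      using bounded[of n] by simp
  qed (simp add: fp_nonneg)
  ultimately show ?thesis unfolding pos_recurrent_def by (simp add: sums_iff)
qed

text \<open>A Lyapunov-type criterion: W bounds E min(tau, N) by induction on N, since the
  chain killed at y consumes at least m units of time before W has decreased by m.\<close>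

lemma pos_recurrent_if_taboo_lyapunov:
  assumes W_nonneg: "\<And>z. 0 \<le> W z"
    and W_decrease: "\<And>z. \<exists>m\<ge>1. real m + (taboo y ^^ m) W z \<le> W z"
  shows "pos_recurrent pr phi y"
proof (rule pos_recurrent_if_trunc_return_time_bounded)
  show "trunc_return_time y N z \<le> W z" for N z
  proof (induction N arbitrary: z rule: less_induct)
    case (less N)
    obtain m where m: "m \<ge> 1" "real m + (taboo y ^^ m) W z \<le> W z"
      using W_decrease by blast
    have "0 \<le> (taboo y ^^ m) W z" by (rule taboo_pow_nonneg) (rule W_nonneg)
    show ?case
    proof (cases "N \<le> m")
      case True
      then show ?thesis using trunc_return_time_le[of y N z] m \<open>0 \<le> (taboo y ^^ m) W z\<close>
        by linarith
    next
      case False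
      define K where "K = N - m"
      have K: "N = K + m" "K < N" using m(1) False by (auto simp: K_def)
      have "trunc_return_time y N z \<le> real m + (taboo y ^^ m) (trunc_return_time y K) z"
        using trunc_return_time_add K(1) by simp
      also have "\<dots> \<le> real m + (taboo y ^^ m) W z"
        using less K(2) by (intro add_left_mono taboo_pow_mono) auto
      finally show ?thesis using m by linarith
    qed
  qed
qed

lemma Pn_nonneg: "0 \<le> Pn pr phi n x y"
proof (induction n arbitrary: x)
  case (Suc n)
  then have "step pr phi (\<lambda>_. 0) x \<le> step pr phi (\<lambda>z. Pn pr phi n z y) x"
    by (intro step_mono) auto
  then show ?case by (simp add: step_const)
qed simp

lemma Pn_nonzero_parity: "Pn pr phi n x y \<noteq> 0 \<Longrightarrow> even (int n + sum x UNIV - sum y UNIV)"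
proof (induction n arbitrary: x)
  case 0
  then show ?case by (simp split: if_splits)
next
  case (Suc n)
  then have "step pr phi (\<lambda>z. Pn pr phi n z y) x \<noteq> 0" by simp
  then obtain s where "pr s * (phi x s * Pn pr phi n (x(s := x s + 1)) y
      + (1 - phi x s) * Pn pr phi n (x(s := x s - 1)) y) \<noteq> 0"
    unfolding step_def by (meson sum.neutral)
  then have "Pn pr phi n (x(s := x s + 1)) y \<noteq> 0 \<or> Pn pr phi n (x(s := x s - 1)) y \<noteq> 0"
    by auto
  then show ?case
  proof
    assume "Pn pr phi n (x(s := x s + 1)) y \<noteq> 0"
    from Suc.IH[OF this] have "even (int n + (sum x UNIV + 1) - sum y UNIV)"
      unfolding sum_state_upd by simp
    moreover have "int (Suc n) + sum x UNIV - sum y UNIV = int n + (sum x UNIV + 1) - sum y UNIV"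
      by simp
    ultimately show ?case by (simp only:)
  next
    assume "Pn pr phi n (x(s := x s - 1)) y \<noteq> 0"
    from Suc.IH[OF this] have "even (int n + (sum x UNIV - 1) - sum y UNIV)"
      unfolding sum_state_upd by simp
    moreover have "int (Suc n) + sum x UNIV - sum y UNIV = (int n + (sum x UNIV - 1) - sum y UNIV) + 2"
      by simp
    ultimately show ?case by (metis dvd_add dvd_refl)
  qed
qed

end

section \<open>Walks with transition probabilities bounded below\<close>

locale elliptic_walk = walk +
  fixes c :: real
  assumes c_pos: "0 < c"
    and c_le_up: "\<And>x s. c \<le> pr s * phi x s"
    and c_le_down: "\<And>x s. c \<le> pr s * (1 - phi x s)"
begin

lemma c_le_pr: "c \<le> pr s"
proof -
  have "pr s * phi x s \<le> pr s"
    using phi_le_1 pr_pos[of s] by (simp add: mult_left_le)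
  then show ?thesis using c_le_up[of s x] by linarith
qed

lemma c_le_1: "c \<le> 1"
  using c_le_pr pr_le_1 by (rule order_trans)

lemma taboo_le_1_minus:
  assumes f_le_1: "\<And>w. f w \<le> 1" and neighbour: "w = z(s := z s + 1) \<or> w = z(s := z s - 1)"
    and at_w: "(if w = y then 0 else f w) \<le> 1 - \<delta>" and "0 \<le> \<delta>"
  shows "taboo y f z \<le> 1 - c * \<delta>"
proof -
  let ?g = "\<lambda>w. 1 + (-1) * (if w = y then 0 else f w)"
  have g_nonneg: "0 \<le> ?g w" for w using f_le_1[of w] by simp
  have "c * \<delta> \<le> step pr phi ?g z"
    using neighbour
  proof
    assume w: "w = z(s := z s + 1)"
    have "c * \<delta> \<le> pr s * phi z s * ?g w"
      using at_w \<open>0 \<le> \<delta>\<close> c_le_up[of s z] c_pos by (intro mult_mono) auto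
    also have "\<dots> \<le> step pr phi ?g z"
      unfolding w by (rule step_ge_moves(1)) (rule g_nonneg)
    finally show ?thesis .
  next
    assume w: "w = z(s := z s - 1)"
    have "c * \<delta> \<le> pr s * (1 - phi z s) * ?g w"
      using at_w \<open>0 \<le> \<delta>\<close> c_le_down[of s z] c_pos by (intro mult_mono) auto
    also have "\<dots> \<le> step pr phi ?g z"
      unfolding w by (rule step_ge_moves(2)) (rule g_nonneg)
    finally show ?thesis .
  qed
  moreover have "step pr phi ?g z = 1 - taboo y f z"
    unfolding step_add_scaled step_const taboo_def by simp
  ultimately show ?thesis by simp
qed

text \<open>Walking straight towards y, the chain hits y within dist1 z y steps with probability
  at least c to that power.\<close>

lemma survival_le_of_dist1:
  "dist1 z y \<le> int n \<Longrightarrow> (if z = y then 0 else survival y n z) \<le> 1 - c ^ n"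
proof (induction n arbitrary: z)
  case 0
  then show ?case using dist1_nonneg[of z y] dist1_eq_0_iff[of z y] by simp
next
  case (Suc n)
  show ?case
  proof (cases "z = y")
    case True
    then show ?thesis using c_le_1 c_pos by (simp add: power_le_one mult_le_one)
  next
    case False
    then obtain s w where w: "w = z(s := z s + 1) \<or> w = z(s := z s - 1)"
      and "dist1 w y = dist1 z y - 1"
      by (rule dist1_decreasing_neighbour)
    then have "(if w = y then 0 else survival y n w) \<le> 1 - c ^ n"
      using Suc by (intro Suc.IH) simp
    then have "taboo y (survival y n) z \<le> 1 - c * c ^ n"
      by (intro taboo_le_1_minus[OF survival_le_1 w]) (use c_pos in simp_all)
    with False show ?thesis by (simp add: survival_Suc)
  qed
qed

lemma survival_return_le: "survival y 2 y \<le> 1 - c ^ 2"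
proof -
  let ?w = "y((False,False) := y (False,False) + 1)"
  have "dist1 y y = 0" by (simp add: dist1_eq_0_iff)
  then have "dist1 ?w y \<le> int 1"
    unfolding dist1_upd by simp
  from survival_le_of_dist1[OF this]
  have "taboo y (survival y 1) y \<le> 1 - c * c ^ 1"
    by (intro taboo_le_1_minus[OF survival_le_1, where w = ?w and s = "(False,False)"])
      (use c_pos in simp_all)
  then show ?thesis by (simp add: survival_Suc numeral_2_eq_2 power2_eq_square)
qed

lemma survival_le_near:
  fixes y z :: state and R :: real
  assumes "norm1 z < R"
  defines "M \<equiv> nat \<lceil>R\<rceil> + nat \<lceil>norm1 y\<rceil> + 2"
  shows "\<exists>m. 1 \<le> m \<and> m \<le> M \<and> survival y m z \<le> 1 - c ^ M"
proof -
  have c_pow: "c ^ M \<le> c ^ m" if "m \<le> M" for m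
    using that c_pos c_le_1 by (intro power_decreasing) auto
  show ?thesis
  proof (cases "z = y")
    case True
    have "c ^ M \<le> c ^ 2" by (rule c_pow) (simp add: M_def)
    with True show ?thesis using survival_return_le[of y] by (intro exI[of _ 2]) (simp add: M_def)
  next
    case False
    define m where "m = nat (dist1 z y)"
    have "dist1 z y \<noteq> 0" using False dist1_eq_0_iff by simp
    then have "1 \<le> m" using dist1_nonneg[of z y] by (simp add: m_def)
    have "of_int (dist1 z y) < R + norm1 y"
      using dist1_le_norm1[of z y] assms(1) by simp
    also have "\<dots> \<le> real (nat \<lceil>R\<rceil>) + real (nat \<lceil>norm1 y\<rceil>)"
      by (intro add_mono) (simp_all add: real_nat_ceiling_ge)
    finally have "m \<le> M" unfolding m_def M_def by linarith
    moreover have "survival y m z \<le> 1 - c ^ m"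
      using survival_le_of_dist1[of z y m] False dist1_nonneg[of z y] by (simp add: m_def)
    ultimately show ?thesis using \<open>1 \<le> m\<close> c_pow[of m] by (intro exI[of _ m]) simp
  qed
qed

lemma taboo_pow_le_quadratic:
  assumes "\<And>w. f w \<le> (norm1 w)\<^sup>2"
  shows "(taboo y ^^ j) f z \<le> (norm1 z + real j)\<^sup>2"
proof (induction j arbitrary: z)
  case 0
  then show ?case using assms by simp
next
  case (Suc j)
  have "(taboo y ^^ j) f w \<le> (norm1 z + real (Suc j))\<^sup>2" if "norm1 w \<le> norm1 z + 1" for w
  proof -
    have "(taboo y ^^ j) f w \<le> (norm1 w + real j)\<^sup>2" by (rule Suc.IH)
    also have "\<dots> \<le> (norm1 z + real (Suc j))\<^sup>2"
      using that norm1_nonneg[of w] by (intro power_mono) auto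
    finally show ?thesis .
  qed
  then have "taboo y ((taboo y ^^ j) f) z \<le> (norm1 z + real (Suc j))\<^sup>2"
    by (intro taboo_le_neighbours) (simp_all add: norm1_upd_le)
  then show ?case by simp
qed

text \<open>Foster's criterion. Far from the origin V itself decreases; in the finite region
  where it may not, the return estimate survival_le_near lets a large constant beta pay
  for the missing decrease.\<close>

theorem pos_recurrent_if_drift:
  assumes V_nonneg: "\<And>z. 0 \<le> V z" and V_le: "\<And>z. V z \<le> (norm1 z)\<^sup>2"
    and drift: "\<And>z. R \<le> norm1 z \<Longrightarrow> step pr phi V z \<le> V z - 1"
  shows "pos_recurrent pr phi y"
proof -
  define M where "M = nat \<lceil>R\<rceil> + nat \<lceil>norm1 y\<rceil> + 2"
  define \<beta> where "\<beta> = ((R + real M)\<^sup>2 + real M) / c ^ M"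
  have "0 < c ^ M" using c_pos by simp
  then have "0 \<le> \<beta>" and \<beta>: "\<beta> * c ^ M = (R + real M)\<^sup>2 + real M"
    using c_pos by (simp_all add: \<beta>_def)
  show ?thesis
  proof (rule pos_recurrent_if_taboo_lyapunov)
    show W_nonneg: "0 \<le> V z + \<beta>" for z using V_nonneg[of z] \<open>0 \<le> \<beta>\<close> by simp
    show "\<exists>m\<ge>1. real m + (taboo y ^^ m) (\<lambda>z. V z + \<beta>) z \<le> V z + \<beta>" for z
    proof (cases "R \<le> norm1 z")
      case True
      have "taboo y (\<lambda>z. V z + \<beta>) z \<le> step pr phi (\<lambda>w. V w + \<beta> * 1) z"
        unfolding taboo_def by (rule step_mono) (use W_nonneg in auto)
      also have "\<dots> \<le> V z - 1 + \<beta>"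
        using drift[OF True] by (simp only: step_add_scaled step_const)
      finally show ?thesis by (intro exI[of _ 1]) simp
    next
      case False
      then obtain m where m: "1 \<le> m" "m \<le> M" "survival y m z \<le> 1 - c ^ M"
        using survival_le_near[of z R y] by (auto simp: M_def)
      have "(taboo y ^^ m) V z \<le> (norm1 z + real m)\<^sup>2"
        by (rule taboo_pow_le_quadratic) (rule V_le)
      also have "\<dots> \<le> (R + real M)\<^sup>2"
        using False m(2) norm1_nonneg[of z] by (intro power_mono) auto
      finally have "(taboo y ^^ m) (\<lambda>z. V z + \<beta> * 1) z \<le> (R + real M)\<^sup>2 + \<beta> * (1 - c ^ M)"
        using m(3) \<open>0 \<le> \<beta>\<close> unfolding taboo_pow_add_scaled survival_def[symmetric]
        by (intro add_mono mult_left_mono) auto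
      also have "\<dots> = \<beta> - real M" using \<beta> by (simp add: algebra_simps)
      finally show ?thesis using m(1,2) V_nonneg[of z] by (intro exI[of _ m]) auto
    qed
  qed
qed

lemma Pn_2_self_pos: "0 < Pn pr phi 2 x x"
proof -
  define s :: stratum where "s = (False,False)"
  define u where "u = x(s := x s + 1)"
  have u_back: "u(s := u s - 1) = x" unfolding u_def by auto
  have "pr s * (1 - phi u s) * Pn pr phi 0 (u(s := u s - 1)) x \<le> step pr phi (\<lambda>z. Pn pr phi 0 z x) u"
    by (rule step_ge_moves(2)) (rule Pn_nonneg)
  then have "c \<le> Pn pr phi (Suc 0) u x" using c_le_down[of s u] by (simp add: u_back)
  moreover have "pr s * phi x s * Pn pr phi (Suc 0) u x \<le> step pr phi (\<lambda>z. Pn pr phi (Suc 0) z x) x"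
    unfolding u_def by (rule step_ge_moves(1)) (rule Pn_nonneg)
  moreover have "0 < pr s * phi x s * Pn pr phi (Suc 0) u x"
    using mult_pos_pos[of "pr s * phi x s" "Pn pr phi (Suc 0) u x"] c_le_up[of s x] c_pos
      \<open>c \<le> Pn pr phi (Suc 0) u x\<close> by linarith
  ultimately show ?thesis by (simp add: numeral_2_eq_2)
qed

lemma period_eq_2: "period pr phi x = 2"
proof -
  let ?A = "{n. 0 < n \<and> 0 < Pn pr phi n x x}"
  have "Gcd ?A dvd 2" using Pn_2_self_pos by (intro Gcd_dvd) simp
  moreover have "2 dvd Gcd ?A"
    using Pn_nonzero_parity[of _ x x] by (intro Gcd_greatest) fastforce
  ultimately show ?thesis unfolding period_def by (simp add: dvd_antisym)
qed

end

section \<open>The design with two binary covariates\<close>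

lemma sq_sum4_le: "((u::real) + v + w + t)\<^sup>2 \<le> 4 * (u\<^sup>2 + v\<^sup>2 + w\<^sup>2 + t\<^sup>2)"
proof -
  have "0 \<le> (u - v)\<^sup>2 + (u - w)\<^sup>2 + (u - t)\<^sup>2 + (v - w)\<^sup>2 + (v - t)\<^sup>2 + (w - t)\<^sup>2"
    by simp
  then show ?thesis by (simp add: power2_eq_square algebra_simps)
qed

lemma sq_add_sq_le_sq_abs_add: "(u::real)\<^sup>2 + v\<^sup>2 \<le> (\<bar>u\<bar> + \<bar>v\<bar>)\<^sup>2"
  by (simp add: power2_eq_square algebra_simps)

locale design =
  fixes pr :: "stratum \<Rightarrow> real" and p q wo wm1 wm2 ws :: real
  assumes pr_pos: "\<And>s. 0 < pr s" and pr_sum: "(\<Sum>s\<in>UNIV. pr s) = 1"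
    and q_pos: "0 < q" and q_less_p: "q < p" and p_plus_q: "p + q = 1"
    and wo_nonneg: "0 \<le> wo" and wm1_nonneg: "0 \<le> wm1" and wm2_nonneg: "0 \<le> wm2"
    and ws_nonneg: "0 \<le> ws" and weights_sum: "wo + wm1 + wm2 + ws = 1"
begin

abbreviation phi :: "state \<Rightarrow> stratum \<Rightarrow> real" where
  "phi \<equiv> prob1 p q wo wm1 wm2 ws"

lemma phi_between: "q \<le> phi x s" "phi x s \<le> p"
  unfolding prob1_def using q_less_p p_plus_q by auto

sublocale elliptic_walk pr phi "Min (range pr) * q"
proof unfold_locales
  have "Min (range pr) \<in> range pr" by (rule Min_in) auto
  then show "0 < Min (range pr) * q" using pr_pos q_pos by auto
  fix x s
  have "Min (range pr) \<le> pr s" by (rule Min_le) auto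
  moreover have "q \<le> phi x s" "q \<le> 1 - phi x s" using phi_between[of x s] p_plus_q by auto
  moreover have "0 \<le> pr s" "0 \<le> q" using pr_pos[of s] q_pos by simp_all
  ultimately show "Min (range pr) * q \<le> pr s * phi x s" "Min (range pr) * q \<le> pr s * (1 - phi x s)"
    by (simp_all add: mult_mono)
  show "0 \<le> phi x s" "phi x s \<le> 1" using phi_between[of x s] q_pos p_plus_q by auto
qed (use pr_pos pr_sum in auto)

text \<open>In the paper's notation, imb_grad x s = w_o D + sum_i w_m,i D(i;k_i) + w_s D(k_1,k_2),
  a quarter of the difference Imb^(1) - Imb^(2) (see phi_eq).\<close>

definition imb_grad :: "state \<Rightarrow> stratum \<Rightarrow> real" where
  "imb_grad x s = wo * of_int (sum x UNIV) + wm1 * of_int (x (fst s, False) + x (fst s, True))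
     + wm2 * of_int (x (False, snd s) + x (True, snd s)) + ws * of_int (x s)"

definition total_imb :: "state \<Rightarrow> real" where
  "total_imb x = wo * (of_int (sum x UNIV))\<^sup>2
     + wm1 * ((of_int (x (False,False) + x (False,True)))\<^sup>2 + (of_int (x (True,False) + x (True,True)))\<^sup>2)
     + wm2 * ((of_int (x (False,False) + x (True,False)))\<^sup>2 + (of_int (x (False,True) + x (True,True)))\<^sup>2)
     + ws * (\<Sum>s\<in>UNIV. (of_int (x s))\<^sup>2)"

lemma phi_eq: "phi x s = (if imb_grad x s > 0 then q else if imb_grad x s < 0 then p else 1/2)"
proof -
  have "imb wo wm1 wm2 ws x s 1 - imb wo wm1 wm2 ws x s (-1) = 4 * imb_grad x s"
    unfolding imb_def imb_grad_def by (simp add: power2_eq_square algebra_simps)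
  then show ?thesis unfolding prob1_def by auto
qed

lemma biased_coin_drift: "(2 * phi x s - 1) * imb_grad x s = - (p - q) * \<bar>imb_grad x s\<bar>"
proof -
  have "2 * phi x s - 1 = - (p - q) * sgn (imb_grad x s)"
    using p_plus_q by (simp add: phi_eq sgn_if)
  then show ?thesis by (simp add: abs_sgn mult_ac)
qed

lemma total_imb_upd:
  "total_imb (x(s := x s + 1)) = total_imb x + 2 * imb_grad x s + 1"
  "total_imb (x(s := x s - 1)) = total_imb x - 2 * imb_grad x s + 1"
  using weights_sum
  by (cases s; simp add: total_imb_def imb_grad_def sum_strata power2_eq_square algebra_simps
      split: bool.splits)+

lemma step_total_imb:
  "step pr phi total_imb x = total_imb x + 1 - 2 * (p - q) * (\<Sum>s\<in>UNIV. pr s * \<bar>imb_grad x s\<bar>)"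
proof -
  have "pr s * (phi x s * total_imb (x(s := x s + 1)) + (1 - phi x s) * total_imb (x(s := x s - 1)))
      = pr s * (total_imb x + 1) - 2 * (p - q) * (pr s * \<bar>imb_grad x s\<bar>)" for s
    using biased_coin_drift[of x s] unfolding total_imb_upd by algebra
  then have "step pr phi total_imb x
      = (\<Sum>s\<in>UNIV. pr s * (total_imb x + 1) - 2 * (p - q) * (pr s * \<bar>imb_grad x s\<bar>))"
    unfolding step_def by simp
  also have "\<dots> = total_imb x + 1 - 2 * (p - q) * (\<Sum>s\<in>UNIV. pr s * \<bar>imb_grad x s\<bar>)"
    by (simp add: sum_subtractf pr_sum flip: sum_distrib_left sum_distrib_right)
  finally show ?thesis .
qed

lemma total_imb_nonneg: "0 \<le> total_imb x"
  unfolding total_imb_def using wo_nonneg wm1_nonneg wm2_nonneg ws_nonneg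
  by (intro add_nonneg_nonneg mult_nonneg_nonneg sum_nonneg) auto

lemma total_imb_eq_sum_grad: "total_imb x = (\<Sum>s\<in>UNIV. of_int (x s) * imb_grad x s)"
  unfolding total_imb_def imb_grad_def by (simp add: sum_strata power2_eq_square algebra_simps)

lemma total_imb_le_norm1: "total_imb x \<le> (norm1 x)\<^sup>2"
proof -
  define a where "a s = real_of_int (x s)" for s
  have N: "norm1 x = \<bar>a (False,False)\<bar> + \<bar>a (False,True)\<bar> + \<bar>a (True,False)\<bar> + \<bar>a (True,True)\<bar>"
    unfolding norm1_def sum_strata a_def ..
  have sq_le: "u\<^sup>2 \<le> (norm1 x)\<^sup>2" if "\<bar>u\<bar> \<le> norm1 x" for u :: real
    using that power_mono[of "\<bar>u\<bar>" "norm1 x" 2] by simp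
  have sq2_le: "u\<^sup>2 + v\<^sup>2 \<le> (norm1 x)\<^sup>2" if "\<bar>u\<bar> + \<bar>v\<bar> \<le> norm1 x" for u v :: real
  proof -
    have "(\<bar>u\<bar> + \<bar>v\<bar>)\<^sup>2 \<le> (norm1 x)\<^sup>2" using that by (intro power_mono) auto
    then show ?thesis using sq_add_sq_le_sq_abs_add[of u v] by linarith
  qed
  have "(of_int (sum x UNIV))\<^sup>2 \<le> (norm1 x)\<^sup>2"
    by (rule sq_le) (simp add: N sum_strata a_def)
  moreover have "(of_int (x (False,False) + x (False,True)))\<^sup>2
      + (of_int (x (True,False) + x (True,True)))\<^sup>2 \<le> (norm1 x)\<^sup>2"
    by (rule sq2_le) (simp add: N a_def)
  moreover have "(of_int (x (False,False) + x (True,False)))\<^sup>2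
      + (of_int (x (False,True) + x (True,True)))\<^sup>2 \<le> (norm1 x)\<^sup>2"
    by (rule sq2_le) (simp add: N a_def)
  moreover have "(\<Sum>s\<in>UNIV. (of_int (x s))\<^sup>2) \<le> (norm1 x)\<^sup>2"
    unfolding norm1_def sum_strata by (simp add: power2_eq_square algebra_simps)
  ultimately have "total_imb x \<le> (wo + wm1 + wm2 + ws) * (norm1 x)\<^sup>2"
    unfolding total_imb_def distrib_right
    using wo_nonneg wm1_nonneg wm2_nonneg ws_nonneg by (intro add_mono mult_left_mono) auto
  then show ?thesis using weights_sum by simp
qed

text \<open>Cauchy-Schwarz bounds the l1 norm by the squared imbalance, which in turn is
  controlled by the gradient through total_imb_eq_sum_grad.\<close>

lemma norm1_le_sum_grad: "ws * norm1 x \<le> 4 * (\<Sum>s\<in>UNIV. \<bar>imb_grad x s\<bar>)"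
proof -
  let ?a = "\<lambda>s. real_of_int (x s)" and ?G = "\<Sum>s\<in>UNIV. \<bar>imb_grad x s\<bar>"
  have sq: "(norm1 x)\<^sup>2 \<le> 4 * (\<Sum>s\<in>UNIV. (?a s)\<^sup>2)"
    using sq_sum4_le[of "\<bar>?a (False,False)\<bar>" "\<bar>?a (False,True)\<bar>" "\<bar>?a (True,False)\<bar>" "\<bar>?a (True,True)\<bar>"]
    unfolding norm1_def sum_strata by simp
  have ws_sq: "ws * (\<Sum>s\<in>UNIV. (?a s)\<^sup>2) \<le> total_imb x"
    unfolding total_imb_def using wo_nonneg wm1_nonneg wm2_nonneg
    by simp
  have grad: "total_imb x \<le> norm1 x * ?G"
  proof -
    have "total_imb x \<le> (\<Sum>s\<in>UNIV. \<bar>?a s\<bar> * \<bar>imb_grad x s\<bar>)"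
      unfolding total_imb_eq_sum_grad by (rule sum_mono) (simp flip: abs_mult)
    also have "\<dots> \<le> (\<Sum>s\<in>UNIV. norm1 x * \<bar>imb_grad x s\<bar>)"
      unfolding norm1_def by (intro sum_mono mult_right_mono member_le_sum) auto
    finally show ?thesis by (simp add: sum_distrib_left)
  qed
  have "ws * (norm1 x)\<^sup>2 \<le> 4 * (ws * (\<Sum>s\<in>UNIV. (?a s)\<^sup>2))"
    using mult_left_mono[OF sq ws_nonneg] by simp
  also have "\<dots> \<le> 4 * (norm1 x * ?G)" using ws_sq grad by simp
  finally have "ws * norm1 x * norm1 x \<le> 4 * ?G * norm1 x"
    by (simp add: power2_eq_square algebra_simps)
  moreover have "0 \<le> ?G" by (simp add: sum_nonneg)
  ultimately show ?thesis
    using norm1_nonneg[of x] by (cases "norm1 x = 0") (simp_all add: mult_le_cancel_right)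
qed

lemma total_imb_drift:
  assumes "0 < ws"
  shows "\<exists>R. \<forall>x. R \<le> norm1 x \<longrightarrow> step pr phi total_imb x \<le> total_imb x - 1"
proof (intro exI allI impI)
  let ?c = "Min (range pr) * q"
  fix x assume far: "4 / ((p - q) * ?c * ws) \<le> norm1 x"
  let ?K = "\<Sum>s\<in>UNIV. pr s * \<bar>imb_grad x s\<bar>"
  have "0 < p - q" "0 < ?c" using q_less_p c_pos by simp_all
  have "?c * (ws * norm1 x) \<le> ?c * (4 * (\<Sum>s\<in>UNIV. \<bar>imb_grad x s\<bar>))"
    using norm1_le_sum_grad \<open>0 < ?c\<close> by (intro mult_left_mono) auto
  also have "\<dots> = 4 * (\<Sum>s\<in>UNIV. ?c * \<bar>imb_grad x s\<bar>)"
    by (simp add: sum_distrib_left mult_ac)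
  also have "\<dots> \<le> 4 * ?K"
    by (intro mult_left_mono sum_mono mult_right_mono c_le_pr) auto
  finally have K: "?c * ws * norm1 x \<le> 4 * ?K" by (simp add: mult.assoc)
  have "0 < (p - q) * ?c * ws" using \<open>0 < p - q\<close> \<open>0 < ?c\<close> assms by simp
  with far have "4 \<le> (p - q) * ?c * ws * norm1 x" by (simp add: pos_divide_le_eq mult_ac)
  also have "\<dots> \<le> (p - q) * (4 * ?K)"
    using mult_left_mono[OF K, of "p - q"] \<open>0 < p - q\<close> by (simp add: mult.assoc)
  finally have "1 \<le> (p - q) * ?K" by simp
  then show "step pr phi total_imb x \<le> total_imb x - 1"
    unfolding step_total_imb by linarith
qed

theorem pos_recurrent_design:
  assumes "0 < ws"
  shows "pos_recurrent pr phi y"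
  using total_imb_drift[OF assms] total_imb_nonneg total_imb_le_norm1
  by (metis pos_recurrent_if_drift)

end

section \<open>The linear-system condition\<close>

lemma symmetric_system_iff:
  fixes a b D :: real
  assumes "b < 1" and "D = 1 + b - 2 * a\<^sup>2" and "0 < D"
  shows "(x1 + a * x2 + a * x3 = b \<and> a * x1 + x2 + b * x3 = a \<and> a * x1 + b * x2 + x3 = a)
     \<longleftrightarrow> (x3 = x2 \<and> x2 * D = a * (1 - b) \<and> x1 * D = b + b\<^sup>2 - 2 * a\<^sup>2)"
proof
  assume eqs: "x1 + a * x2 + a * x3 = b \<and> a * x1 + x2 + b * x3 = a \<and> a * x1 + b * x2 + x3 = a"
  have "(1 - b) * (x2 - x3) = (a * x1 + x2 + b * x3 - a) - (a * x1 + b * x2 + x3 - a)"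
    by algebra
  then have "x3 = x2" using eqs \<open>b < 1\<close> by simp
  moreover have x1: "x1 = b - 2 * a * x2" using eqs \<open>x3 = x2\<close> by simp
  moreover have "x2 * D - a * (1 - b) = a * x1 + x2 + b * x3 - a"
    using x1 \<open>x3 = x2\<close> \<open>D = _\<close> by algebra
  moreover have "x1 * D - (b + b\<^sup>2 - 2 * a\<^sup>2) = -2 * a * (x2 * D - a * (1 - b))"
    using x1 \<open>D = _\<close> by algebra
  ultimately show "x3 = x2 \<and> x2 * D = a * (1 - b) \<and> x1 * D = b + b\<^sup>2 - 2 * a\<^sup>2"
    using eqs by simp
next
  assume sol: "x3 = x2 \<and> x2 * D = a * (1 - b) \<and> x1 * D = b + b\<^sup>2 - 2 * a\<^sup>2"
  then have "x3 = x2" by simp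
  have "(x1 + a * x2 + a * x3 - b) * D = (x1 * D - (b + b\<^sup>2 - 2 * a\<^sup>2)) + 2 * a * (x2 * D - a * (1 - b))"
    unfolding \<open>x3 = x2\<close> \<open>D = _\<close> by algebra
  moreover have "(a * x1 + x2 + b * x3 - a) * D = a * (x1 * D - (b + b\<^sup>2 - 2 * a\<^sup>2)) + (1 + b) * (x2 * D - a * (1 - b))"
    unfolding \<open>x3 = x2\<close> \<open>D = _\<close> by algebra
  ultimately have "(x1 + a * x2 + a * x3 - b) * D = 0" "(a * x1 + x2 + b * x3 - a) * D = 0"
    using sol by simp_all
  then have "x1 + a * x2 + a * x2 - b = 0" "a * x1 + x2 + b * x2 - a = 0"
    using \<open>0 < D\<close> unfolding \<open>x3 = x2\<close> by simp_all
  then show "x1 + a * x2 + a * x3 = b \<and> a * x1 + x2 + b * x3 = a \<and> a * x1 + b * x2 + x3 = a"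
    unfolding \<open>x3 = x2\<close> by (intro conjI) linarith+
qed

lemma symmetric_system_bound_iff:
  fixes a b :: real
  assumes "0 \<le> b" "b < 1" "0 \<le> a" "2 * a \<le> 1 + b"
  shows "(\<exists>x1 x2 x3. x1 + a * x2 + a * x3 = b \<and> a * x1 + x2 + b * x3 = a \<and> a * x1 + b * x2 + x3 = a
            \<and> \<bar>x1\<bar> + \<bar>x2\<bar> + \<bar>x3\<bar> < 1)
     \<longleftrightarrow> \<bar>b + b\<^sup>2 - 2 * a\<^sup>2\<bar> + 2 * (a * (1 - b)) < 1 + b - 2 * a\<^sup>2"
    (is "?L \<longleftrightarrow> \<bar>?E\<bar> + 2 * ?F < ?D")
proof -
  have "(2 * a)\<^sup>2 \<le> (1 + b)\<^sup>2" using assms by (intro power_mono) auto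
  moreover have "(1 + b) * (1 + b) < (1 + b) * 2" using assms by (intro mult_strict_left_mono) auto
  ultimately have "0 < ?D" by (simp add: power_mult_distrib power2_eq_square)
  have "0 \<le> ?F" using assms by simp
  have divide: "x * ?D = y \<longleftrightarrow> x = y / ?D" for x y using \<open>0 < ?D\<close> by (simp add: eq_divide_eq)
  have "?L \<longleftrightarrow> (\<exists>x1 x2 x3. (x3 = x2 \<and> x2 * ?D = ?F \<and> x1 * ?D = ?E) \<and> \<bar>x1\<bar> + \<bar>x2\<bar> + \<bar>x3\<bar> < 1)"
    using symmetric_system_iff[OF \<open>b < 1\<close> refl \<open>0 < ?D\<close>] by blast
  also have "\<dots> \<longleftrightarrow> \<bar>?E / ?D\<bar> + \<bar>?F / ?D\<bar> + \<bar>?F / ?D\<bar> < 1"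
    unfolding divide by auto
  also have "\<dots> \<longleftrightarrow> (\<bar>?E\<bar> + ?F + ?F) / ?D < 1"
    by (simp only: add_divide_distrib abs_divide abs_of_pos[OF \<open>0 < ?D\<close>] abs_of_nonneg[OF \<open>0 \<le> ?F\<close>])
  also have "\<dots> \<longleftrightarrow> \<bar>?E\<bar> + ?F + ?F < ?D"
    by (simp only: pos_divide_less_eq[OF \<open>0 < ?D\<close>] mult_1)
  also have "\<dots> \<longleftrightarrow> \<bar>?E\<bar> + 2 * ?F < ?D"
    by (simp only: mult_2 add.assoc)
  finally show ?thesis .
qed

lemma quadratic_neg_iff_less_Cfun:
  fixes b m :: real
  assumes "0 \<le> b" "b < 1" "0 \<le> m"
  shows "4 * (b + m)\<^sup>2 + 2 * (b + m) * (1 - b) - (1 + b)\<^sup>2 < 0 \<longleftrightarrow> m < Cfun b"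
    (is "?Q < 0 \<longleftrightarrow> _")
proof -
  define t where "t = 4 * (b + m) + 1 - b"
  define X where "X = (1 - b)\<^sup>2 + 4 * (1 + b)\<^sup>2"
  define Q where "Q = ?Q"
  have "t\<^sup>2 - X = 4 * Q"
    unfolding t_def X_def Q_def by algebra
  then have "Q < 0 \<longleftrightarrow> t\<^sup>2 < X" by linarith
  also have "\<dots> \<longleftrightarrow> t < sqrt X"
    using real_sqrt_less_iff[of "t\<^sup>2" X] assms by (simp add: t_def)
  also have "\<dots> \<longleftrightarrow> m < Cfun b"
    unfolding Cfun_def t_def X_def by (simp add: field_simps)
  finally show ?thesis unfolding Q_def .
qed

lemma symmetric_bound_iff_quadratic_neg:
  fixes a b :: real
  assumes "b < 1" "0 \<le> a" "2 * a \<le> 1 + b"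
  shows "\<bar>b + b\<^sup>2 - 2 * a\<^sup>2\<bar> + 2 * (a * (1 - b)) < 1 + b - 2 * a\<^sup>2
     \<longleftrightarrow> 4 * a\<^sup>2 + 2 * a * (1 - b) - (1 + b)\<^sup>2 < 0"
    (is "\<bar>?E\<bar> + ?F < ?D \<longleftrightarrow> ?Q < 0")
proof -
  have "?E + ?F - ?D = (1 - b) * (2 * a - (1 + b))" and "- ?E + ?F - ?D = ?Q"
    by algebra+
  moreover have "(1 - b) * (2 * a - (1 + b)) < 0 \<longleftrightarrow> 2 * a < 1 + b"
    using \<open>b < 1\<close> by (simp add: mult_less_0_iff)
  moreover have "2 * a < 1 + b" if "?Q < 0"
  proof (rule ccontr)
    assume "\<not> 2 * a < 1 + b"
    then have "2 * a = 1 + b" using assms by simp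
    then have "?Q = (1 + b) * (1 - b)" by algebra
    with \<open>?Q < 0\<close> \<open>2 * a = 1 + b\<close> assms show False by (simp add: mult_less_0_iff)
  qed
  ultimately show ?thesis by (auto simp: abs_if)
qed

lemma lin_cond_iff_less_Cfun:
  fixes wo wm ws :: real
  assumes "0 \<le> wo" "0 \<le> wm" "0 \<le> ws" "wo + wm + wm + ws = 1"
  shows "lin_cond wo wm wm \<longleftrightarrow> wm < Cfun wo"
proof (cases "wo = 1")
  case True
  then have "wm = 0" using assms by simp
  have "\<not> lin_cond wo wm wm"
  proof
    assume "lin_cond wo wm wm"
    then obtain x1 x2 x3 :: real where "x1 + x2 + x3 = 1" "\<bar>x1\<bar> + \<bar>x2\<bar> + \<bar>x3\<bar> < 1"
      unfolding lin_cond_def Let_def True \<open>wm = 0\<close> by auto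
    then show False by linarith
  qed
  moreover have "sqrt 16 = (4::real)" by (simp add: real_sqrt_unique)
  then have "Cfun wo = 0" unfolding Cfun_def True by simp
  ultimately show ?thesis using \<open>wm = 0\<close> by simp
next
  case False
  then have "wo < 1" using assms by simp
  have "lin_cond wo wm wm \<longleftrightarrow> \<bar>wo + wo\<^sup>2 - 2 * (wo + wm)\<^sup>2\<bar> + 2 * ((wo + wm) * (1 - wo))
      < 1 + wo - 2 * (wo + wm)\<^sup>2"
    unfolding lin_cond_def Let_def
    by (subst symmetric_system_bound_iff[symmetric]) (use assms \<open>wo < 1\<close> in auto)
  also have "\<dots> \<longleftrightarrow> 4 * (wo + wm)\<^sup>2 + 2 * (wo + wm) * (1 - wo) - (1 + wo)\<^sup>2 < 0"
    by (rule symmetric_bound_iff_quadratic_neg) (use assms \<open>wo < 1\<close> in auto)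
  also have "\<dots> \<longleftrightarrow> wm < Cfun wo"
    by (rule quadratic_neg_iff_less_Cfun) (use assms \<open>wo < 1\<close> in auto)
  finally show ?thesis .
qed

theorem corollary1:
  fixes wo wm1 wm2 ws p q :: real and pr :: "stratum \<Rightarrow> real"
  assumes "wo \<ge> 0" "wm1 \<ge> 0" "wm2 \<ge> 0" "ws \<ge> 0"
    and "wo + wm1 + wm2 + ws = 1"
    and "wm1 = wm2"
    and "0 < q" "q < p" "p < 1" "p + q = 1"
    and "\<And>s. pr s > 0" "(\<Sum>s\<in>UNIV. pr s) = 1"
  shows "(lin_cond wo wm1 wm2 \<longleftrightarrow> wm1 < Cfun wo)
       \<and> (ws > 0 \<and> wm1 < Cfun wo \<longrightarrow>
            (\<forall>x. reachable pr (prob1 p q wo wm1 wm2 ws) (\<lambda>_. 0) x \<longrightarrow>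
                 pos_recurrent pr (prob1 p q wo wm1 wm2 ws) x
               \<and> period pr (prob1 p q wo wm1 wm2 ws) x = 2))"
proof -
  interpret design pr p q wo wm1 wm2 ws
    using assms by unfold_locales auto
  have "lin_cond wo wm1 wm2 \<longleftrightarrow> wm1 < Cfun wo"
    using lin_cond_iff_less_Cfun[of wo wm1 ws] assms by simp
  moreover have "pos_recurrent pr phi x \<and> period pr phi x = 2" if "0 < ws" for x
    using pos_recurrent_design[OF that] period_eq_2 by simp
  ultimately show ?thesis by blast
qed

end
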